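(* Let $n\geq 2$ and let $N$ be any integer. The matrix ring $\mathrm{Mat}_n(\mathbb{Z}/N\mathbb{Z})$ has the presentation (as a unital associative ring) $$\mathrm{Mat}_n(\mathbb{Z}/N\mathbb{Z})\cong\langle x,y \mid x^n=0,\ y^n=0,\ xy+(N+1)y^{n-1}x^{n-1}=1\rangle.$$
   Context: All rings are associative with unit, and presentations are taken in the category of unital associative rings: the right-hand side is the quotient of the free ring $\mathbb{Z}\langle x,y\rangle$ by the two-sided ideal generated by $x^n$, $y^n$ and $xy+(N+1)y^{n-1}x^{n-1}-1$. *)

theory Defs
  imports "HOL-Algebra.QuotRing"
begin

text \<open>The free unital associative ring Z<x,y>: finitely supported integer-valued
functions on words over the two-letter alphabet (True = x, False = y).\<close>

definition fr_mult :: "(bool list \<Rightarrow> int) \<Rightarrow> (bool list \<Rightarrow> int) \<Rightarrow> bool list \<Rightarrow> int" where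
  "fr_mult f g w = (\<Sum>k\<in>{0..length w}. f (take k w) * g (drop k w))"

definition fr_one :: "bool list \<Rightarrow> int" where
  "fr_one w = (if w = [] then 1 else 0)"

definition free_ring2 :: "(bool list \<Rightarrow> int) ring" where
  "free_ring2 = \<lparr>carrier = {f. finite {w. f w \<noteq> 0}}, mult = fr_mult, one = fr_one,
     zero = (\<lambda>w. 0), add = (\<lambda>f g w. f w + g w)\<rparr>"

definition gen_x :: "bool list \<Rightarrow> int" where
  "gen_x = (\<lambda>w. if w = [True] then 1 else 0)"

definition gen_y :: "bool list \<Rightarrow> int" where
  "gen_y = (\<lambda>w. if w = [False] then 1 else 0)"

definition presented_ring :: "nat \<Rightarrow> int \<Rightarrow> (bool list \<Rightarrow> int) set ring" where
  "presented_ring n N = free_ring2 Quot genideal free_ring2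
     { gen_x [^]\<^bsub>free_ring2\<^esub> n,
       gen_y [^]\<^bsub>free_ring2\<^esub> n,
       (gen_x \<otimes>\<^bsub>free_ring2\<^esub> gen_y)
         \<oplus>\<^bsub>free_ring2\<^esub> (add_pow free_ring2 (N + 1)
              ((gen_y [^]\<^bsub>free_ring2\<^esub> (n - 1)) \<otimes>\<^bsub>free_ring2\<^esub> (gen_x [^]\<^bsub>free_ring2\<^esub> (n - 1))))
         \<ominus>\<^bsub>free_ring2\<^esub> \<one>\<^bsub>free_ring2\<^esub> }"

text \<open>The matrix ring Mat_n(Z/NZ): n x n matrices (indices < n, entries outside are 0)
whose entries are the canonical representatives r with r mod N = r; all operations
reduce modulo N.  For N = 0 this is Mat_n(Z), for N = 1 or -1 the zero ring.\<close>

definition mat_mult_mod :: "nat \<Rightarrow> int \<Rightarrow> (nat \<Rightarrow> nat \<Rightarrow> int) \<Rightarrow> (nat \<Rightarrow> nat \<Rightarrow> int) \<Rightarrow> nat \<Rightarrow> nat \<Rightarrow> int" where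
  "mat_mult_mod n N A B i j = (if i < n \<and> j < n then (\<Sum>k<n. A i k * B k j) mod N else 0)"

definition mat_one_mod :: "nat \<Rightarrow> int \<Rightarrow> nat \<Rightarrow> nat \<Rightarrow> int" where
  "mat_one_mod n N i j = (if i < n \<and> j < n \<and> i = j then 1 mod N else 0)"

definition mat_add_mod :: "int \<Rightarrow> (nat \<Rightarrow> nat \<Rightarrow> int) \<Rightarrow> (nat \<Rightarrow> nat \<Rightarrow> int) \<Rightarrow> nat \<Rightarrow> nat \<Rightarrow> int" where
  "mat_add_mod N A B i j = (A i j + B i j) mod N"

definition matZN :: "nat \<Rightarrow> int \<Rightarrow> (nat \<Rightarrow> nat \<Rightarrow> int) ring" where
  "matZN n N = \<lparr>carrier = {A. (\<forall>i j. A i j mod N = A i j) \<and> (\<forall>i j. (n \<le> i \<or> n \<le> j) \<longrightarrow> A i j = 0)},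
     mult = mat_mult_mod n N, one = mat_one_mod n N, zero = (\<lambda>i j. 0), add = mat_add_mod N\<rparr>"

end

theory Submission
  imports Defs "HOL-Algebra.UnivPoly"
begin

text \<open>Write m = n - 1 and e = (N + 1) y^m x^m in the presented ring Q, so that x y = 1 - e.
  Induction gives x^k y^k = 1 - (sum over i < k of x^i e y^i); together with x^n = y^n = 0 this
  shows that e = y^m x^m is an idempotent with N e = 0 and that the elements E i j = x^i e y^j
  (i, j < n) form a complete system of matrix units. Hence A \<mapsto> (sum of A i j E i j) is a
  unital ring homomorphism Mat_n(\<int>/N) \<rightarrow> Q, and it is onto because x and y are sums of the
  units E (i + 1) i and E i (i + 1).
  For injectivity, represent the free ring on integer n \<times> n matrices by sending x to the lowering
  and y to the raising shift. Every relator is mapped to a matrix divisible by N (the third one to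
  N times the unit at (0, 0)), and the word x^i y^m x^m y^j, a preimage of E i j, is mapped to the
  matrix unit at (i, j); so A can be read off modulo N from its image in Q.\<close>

lemma (in abelian_monoid) finsum_lessThan_Suc:
  "f \<in> {..<Suc k} \<rightarrow> carrier G \<Longrightarrow> (\<Oplus>i\<in>{..<Suc k}. f i) = (\<Oplus>i\<in>{..<k}. f i) \<oplus> f k"
  by (simp add: lessThan_Suc finsum_insert a_comm Pi_def)

lemma (in abelian_monoid) finsum_swap:
  assumes "finite A" "finite B" "\<And>i j. i \<in> A \<Longrightarrow> j \<in> B \<Longrightarrow> F i j \<in> carrier G"
  shows "(\<Oplus>i\<in>A. \<Oplus>j\<in>B. F i j) = (\<Oplus>j\<in>B. \<Oplus>i\<in>A. F i j)"
  using assms(1,3)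
proof (induction A rule: finite_induct)
  case (insert a A)
  have "(\<Oplus>j\<in>B. \<Oplus>i\<in>insert a A. F i j) = (\<Oplus>j\<in>B. F a j \<oplus> (\<Oplus>i\<in>A. F i j))"
    using insert assms(2) by (intro finsum_cong) (auto simp: finsum_insert Pi_def)
  also have "\<dots> = (\<Oplus>j\<in>B. F a j) \<oplus> (\<Oplus>j\<in>B. \<Oplus>i\<in>A. F i j)"
    using insert by (intro finsum_addf) (auto simp: Pi_def)
  finally show ?case
    using insert assms(2) by (simp add: finsum_insert Pi_def)
qed (simp add: finsum_zero)

lemma (in abelian_group) add_pow_finsum:
  "finite A \<Longrightarrow> f \<in> A \<rightarrow> carrier G \<Longrightarrow> [(z::int)] \<cdot> (\<Oplus>i\<in>A. f i) = (\<Oplus>i\<in>A. [z] \<cdot> f i)"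
  by (induction A rule: finite_induct) (auto simp: finsum_insert add.int_pow_distrib Pi_def)

lemma (in abelian_group) finsum_add_pow:
  "finite A \<Longrightarrow> a \<in> carrier G \<Longrightarrow> (\<Oplus>i\<in>A. [(z i :: int)] \<cdot> a) = [(\<Sum>i\<in>A. z i)] \<cdot> a"
proof (induction A rule: finite_induct)
  case empty then show ?case by (simp add: add_pow_def)
next
  case (insert x A) then show ?case by (simp add: finsum_insert add.int_pow_mult)
qed

lemma (in ring) add_pow_mult_add_pow:
  "x \<in> carrier R \<Longrightarrow> y \<in> carrier R \<Longrightarrow> ([(a::int)] \<cdot> x) \<otimes> ([(b::int)] \<cdot> y) = [(a * b)] \<cdot> (x \<otimes> y)"
  by (simp add: add_pow_ldistr_int add_pow_rdistr_int add.int_pow_pow mult.commute)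

lemma (in ring_hom_ring) hom_add_pow_int:
  "x \<in> carrier R \<Longrightarrow> h ([(k::int)] \<cdot> x) = [k] \<cdot>\<^bsub>S\<^esub> h x"
  unfolding add_pow_def by (rule group_hom.hom_int_pow[OF a_group_hom]) simp

section \<open>The free ring on two generators\<close>

definition supp :: "(bool list \<Rightarrow> int) \<Rightarrow> bool list set" where
  "supp f = {w. f w \<noteq> 0}"

lemma carrier_free_ring2: "carrier free_ring2 = {f. finite (supp f)}"
  by (simp add: free_ring2_def supp_def)

lemma free_ring2_simps [simp]:
  "mult free_ring2 = fr_mult" "one free_ring2 = fr_one" "zero free_ring2 = (\<lambda>w. 0)"
  "add free_ring2 = (\<lambda>f g w. f w + g w)"
  by (simp_all add: free_ring2_def)

definition splits :: "'a list \<Rightarrow> ('a list \<times> 'a list) set" where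
  "splits w = {(u, v). u @ v = w}"

lemma splits_eq_image: "splits w = (\<lambda>k. (take k w, drop k w)) ` {0..length w}"
proof -
  have "(u, v) \<in> (\<lambda>k. (take k w, drop k w)) ` {0..length w}" if "u @ v = w" for u v
    using that by (intro image_eqI[of _ _ "length u"]) auto
  then show ?thesis by (auto simp: splits_def)
qed

lemma finite_splits [simp]: "finite (splits w)"
  by (simp add: splits_eq_image)

lemma fr_mult_splits: "fr_mult f g w = (\<Sum>(u, v)\<in>splits w. f u * g v)"
proof -
  have "inj_on (\<lambda>k. (take k w, drop k w)) {0..length w}"
    by (rule inj_onI) (metis atLeastAtMost_iff length_take min.absorb2 prod.inject)
  then show ?thesis
    unfolding fr_mult_def splits_eq_image by (simp add: sum.reindex)
qed

definition splits3 :: "'a list \<Rightarrow> ('a list \<times> 'a list \<times> 'a list) set" where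
  "splits3 w = {(a, b, d). a @ b @ d = w}"

lemma fr_mult_assoc_left:
  "fr_mult (fr_mult f g) h w = (\<Sum>(a, b, d)\<in>splits3 w. f a * g b * h d)"
proof -
  have "fr_mult (fr_mult f g) h w = (\<Sum>(c, d)\<in>splits w. \<Sum>(a, b)\<in>splits c. f a * g b * h d)"
    by (simp add: fr_mult_splits sum_distrib_right case_prod_unfold)
  also have "\<dots> = (\<Sum>((c, d), (a, b))\<in>Sigma (splits w) (\<lambda>(c, d). splits c). f a * g b * h d)"
    by (simp add: sum.Sigma split_def)
  also have "\<dots> = (\<Sum>(a, b, d)\<in>splits3 w. f a * g b * h d)"
    by (rule sum.reindex_bij_witness[where i = "\<lambda>(a, b, d). ((a @ b, d), (a, b))"
          and j = "\<lambda>((c, d), (a, b)). (a, b, d)"]) (auto simp: splits_def splits3_def)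
  finally show ?thesis .
qed

lemma fr_mult_assoc_right:
  "fr_mult f (fr_mult g h) w = (\<Sum>(a, b, d)\<in>splits3 w. f a * g b * h d)"
proof -
  have "fr_mult f (fr_mult g h) w = (\<Sum>(a, e)\<in>splits w. \<Sum>(b, d)\<in>splits e. f a * g b * h d)"
    by (simp add: fr_mult_splits sum_distrib_left case_prod_unfold mult.assoc)
  also have "\<dots> = (\<Sum>((a, e), (b, d))\<in>Sigma (splits w) (\<lambda>(a, e). splits e). f a * g b * h d)"
    by (simp add: sum.Sigma split_def)
  also have "\<dots> = (\<Sum>(a, b, d)\<in>splits3 w. f a * g b * h d)"
    by (rule sum.reindex_bij_witness[where i = "\<lambda>(a, b, d). ((a, b @ d), (b, d))"
          and j = "\<lambda>((a, e), (b, d)). (a, b, d)"]) (auto simp: splits_def splits3_def)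
  finally show ?thesis .
qed

lemma fr_mult_assoc: "fr_mult (fr_mult f g) h = fr_mult f (fr_mult g h)"
  by (simp add: fun_eq_iff fr_mult_assoc_left fr_mult_assoc_right)

lemma fr_mult_eq_sum_supports:
  assumes "finite A" "finite B" "supp f \<subseteq> A" "supp g \<subseteq> B"
  shows "fr_mult f g w = (\<Sum>a\<in>A. \<Sum>b\<in>B. if a @ b = w then f a * g b else 0)"
proof -
  have "(\<Sum>a\<in>A. \<Sum>b\<in>B. if a @ b = w then f a * g b else 0)
      = (\<Sum>(a, b)\<in>(A \<times> B) \<inter> splits w. f a * g b)"
    using assms by (simp add: sum.cartesian_product sum.inter_restrict splits_def split_def)
  also have "\<dots> = (\<Sum>(a, b)\<in>splits w. f a * g b)"
    using assms by (intro sum.mono_neutral_left) (auto simp: supp_def)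
  finally show ?thesis by (simp add: fr_mult_splits)
qed

lemma supp_fr_mult: "supp (fr_mult f g) \<subseteq> (\<lambda>(a, b). a @ b) ` (supp f \<times> supp g)"
proof
  fix w assume "w \<in> supp (fr_mult f g)"
  then have "(\<Sum>p\<in>splits w. f (fst p) * g (snd p)) \<noteq> 0"
    by (simp add: supp_def fr_mult_splits split_def)
  then obtain p where "p \<in> splits w" "f (fst p) * g (snd p) \<noteq> 0"
    by (meson sum.not_neutral_contains_not_neutral)
  then show "w \<in> (\<lambda>(a, b). a @ b) ` (supp f \<times> supp g)"
    by (intro rev_image_eqI[of p]) (auto simp: splits_def supp_def)
qed

lemma finite_supp_smult: "finite (supp f) \<Longrightarrow> finite (supp (\<lambda>w. z * f w))"
  by (rule finite_subset[of _ "supp f"]) (auto simp: supp_def)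

lemma finite_supp_sum:
  assumes "finite K" "\<And>k. k \<in> K \<Longrightarrow> finite (supp (h k))"
  shows "finite (supp (\<lambda>w. \<Sum>k\<in>K. h k w))"
proof (rule finite_subset)
  show "supp (\<lambda>w. \<Sum>k\<in>K. h k w) \<subseteq> (\<Union>k\<in>K. supp (h k))"
    by (auto simp: supp_def dest: sum.not_neutral_contains_not_neutral)
qed (use assms in auto)

lemma finite_supp_fr_mult: "finite (supp f) \<Longrightarrow> finite (supp g) \<Longrightarrow> finite (supp (fr_mult f g))"
  by (rule finite_subset[OF supp_fr_mult]) auto

lemma finite_supp_diff: "finite (supp f) \<Longrightarrow> finite (supp g) \<Longrightarrow> finite (supp (\<lambda>w. f w - g w))"
  by (rule finite_subset[of _ "supp f \<union> supp g"]) (auto simp: supp_def)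

lemma finite_supp_add: "finite (supp f) \<Longrightarrow> finite (supp g) \<Longrightarrow> finite (supp (\<lambda>w. f w + g w))"
  by (rule finite_subset[of _ "supp f \<union> supp g"]) (auto simp: supp_def)

lemma fr_one_mult: "fr_mult fr_one f = f"
proof
  fix w
  have "fr_mult fr_one f w = (\<Sum>k\<in>{0..length w}. if k = 0 then f w else 0)"
    unfolding fr_mult_def fr_one_def by (rule sum.cong) auto
  then show "fr_mult fr_one f w = f w" by simp
qed

lemma fr_mult_one: "fr_mult f fr_one = f"
proof
  fix w
  have "fr_mult f fr_one w = (\<Sum>k\<in>{0..length w}. if k = length w then f w else 0)"
    unfolding fr_mult_def fr_one_def by (rule sum.cong) auto
  then show "fr_mult f fr_one w = f w" by simp
qed

lemma fr_mult_add_left: "fr_mult (\<lambda>w. f w + g w) h = (\<lambda>w. fr_mult f h w + fr_mult g h w)"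
  by (simp add: fun_eq_iff fr_mult_def sum.distrib algebra_simps)

lemma fr_mult_add_right: "fr_mult h (\<lambda>w. f w + g w) = (\<lambda>w. fr_mult h f w + fr_mult h g w)"
  by (simp add: fun_eq_iff fr_mult_def sum.distrib algebra_simps)

lemma ring_free_ring2: "ring free_ring2"
proof (rule ringI)
  show "abelian_group free_ring2"
  proof (rule abelian_groupI, goal_cases)
    case (6 f)
    then show ?case
      by (intro bexI[of _ "\<lambda>w. - f w"]) (auto simp: carrier_free_ring2 supp_def)
  qed (auto simp: carrier_free_ring2 finite_supp_add[unfolded supp_def] supp_def)
  show "monoid free_ring2"
    by (rule monoidI)
      (auto simp: carrier_free_ring2 finite_supp_fr_mult fr_mult_assoc fr_one_mult fr_mult_one,
        auto simp: supp_def fr_one_def)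
qed (auto simp: fr_mult_add_left fr_mult_add_right)

interpretation free_ring2: ring free_ring2
  by (rule ring_free_ring2)

lemma a_inv_free_ring2: "f \<in> carrier free_ring2 \<Longrightarrow> \<ominus>\<^bsub>free_ring2\<^esub> f = (\<lambda>w. - f w)"
  by (rule free_ring2.minus_equality) (auto simp: carrier_free_ring2 supp_def)

lemma add_pow_free_ring2:
  assumes "f \<in> carrier free_ring2"
  shows "[(k::int)] \<cdot>\<^bsub>free_ring2\<^esub> f = (\<lambda>w. k * f w)"
proof -
  have nat_pow: "[(j::nat)] \<cdot>\<^bsub>free_ring2\<^esub> f = (\<lambda>w. int j * f w)" for j
    by (induction j) (simp_all add: algebra_simps)
  have "(\<lambda>w. int (nat (- k)) * f w) \<in> carrier free_ring2"
    using assms by (auto simp: carrier_free_ring2 supp_def elim: finite_subset[rotated])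
  then show ?thesis
    by (cases "k \<ge> 0") (simp_all add: add_pow_int_ge add_pow_int_lt nat_pow a_inv_free_ring2)
qed

definition word :: "bool list \<Rightarrow> bool list \<Rightarrow> int" where
  "word u = (\<lambda>w. if w = u then 1 else 0)"

lemma supp_word [simp]: "supp (word u) = {u}"
  by (auto simp: supp_def word_def)

lemma word_closed [simp]: "word u \<in> carrier free_ring2"
  by (simp add: carrier_free_ring2)

lemma word_mult: "fr_mult (word a) (word b) = word (a @ b)"
proof
  fix w show "fr_mult (word a) (word b) w = word (a @ b) w"
    by (subst fr_mult_eq_sum_supports[of "{a}" "{b}"]) (auto simp: word_def supp_def)
qed

lemma fr_one_eq_word: "fr_one = word []"
  by (simp add: fun_eq_iff fr_one_def word_def)

lemma gen_x_eq_word: "gen_x = word [True]"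
  by (simp add: gen_x_def word_def)

lemma gen_y_eq_word: "gen_y = word [False]"
  by (simp add: gen_y_def word_def)

lemma gen_x_closed [simp]: "gen_x \<in> carrier free_ring2"
  by (simp add: gen_x_eq_word)

lemma gen_y_closed [simp]: "gen_y \<in> carrier free_ring2"
  by (simp add: gen_y_eq_word)

lemma word_pow: "word [b] [^]\<^bsub>free_ring2\<^esub> (k::nat) = word (replicate k b)"
  by (induction k) (simp_all add: fr_one_eq_word word_mult replicate_append_same[symmetric])

section \<open>The shift representation\<close>

text \<open>The words of the free ring act on the basis 0, \<dots>, n - 1 of \<int>^n by partial maps, the
  letter x (True) lowering and y (False) raising the index; \<open>walk_matrix n h\<close> is the resulting
  integer matrix of h.\<close>

fun walk :: "nat \<Rightarrow> nat \<Rightarrow> bool list \<Rightarrow> nat option" where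
  "walk n i [] = (if i < n then Some i else None)"
| "walk n i (True # w) = (if 0 < i \<and> i < n then walk n (i - 1) w else None)"
| "walk n i (False # w) = (if i + 1 < n then walk n (i + 1) w else None)"

lemma walk_Some_less: "walk n i w = Some j \<Longrightarrow> i < n \<and> j < n"
  by (induction n i w rule: walk.induct) (auto split: if_splits)

lemma walk_append: "walk n i (a @ b) = (case walk n i a of None \<Rightarrow> None | Some m \<Rightarrow> walk n m b)"
proof (induction n i a rule: walk.induct)
  case (1 n i)
  then show ?case by (cases b; cases "hd b") (auto simp: neq_Nil_conv)
qed auto

lemma walk_replicate_True:
  "walk n i (replicate k True @ w) = (if k \<le> i \<and> i < n then walk n (i - k) w else None)"
proof (induction k arbitrary: i)
  case 0 then show ?case by (cases "walk n i w") (auto dest: walk_Some_less)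
qed auto

lemma walk_replicate_False:
  "walk n i (replicate k False @ w) = (if i + k < n then walk n (i + k) w else None)"
proof (induction k arbitrary: i)
  case 0 then show ?case by (cases "walk n i w") (auto dest: walk_Some_less)
qed auto

definition walk_entry :: "nat \<Rightarrow> bool list \<Rightarrow> nat \<Rightarrow> nat \<Rightarrow> int" where
  "walk_entry n w i j = (if walk n i w = Some j then 1 else 0)"

lemma walk_entry_append: "walk_entry n (a @ b) i j = (\<Sum>m<n. walk_entry n a i m * walk_entry n b m j)"
proof (cases "walk n i a")
  case (Some m)
  then have "m < n" by (simp add: walk_Some_less)
  have "(\<Sum>m'<n. walk_entry n a i m' * walk_entry n b m' j) = (\<Sum>m'<n. if m' = m then walk_entry n b m j else 0)"
    using Some by (intro sum.cong) (auto simp: walk_entry_def)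
  with Some \<open>m < n\<close> show ?thesis
    by (simp add: walk_entry_def walk_append)
qed (simp add: walk_entry_def walk_append)

definition walk_matrix :: "nat \<Rightarrow> (bool list \<Rightarrow> int) \<Rightarrow> nat \<Rightarrow> nat \<Rightarrow> int" where
  "walk_matrix n h i j = (\<Sum>w\<in>supp h. h w * walk_entry n w i j)"

lemma walk_matrix_eq_sum:
  assumes "finite A" "supp h \<subseteq> A"
  shows "walk_matrix n h i j = (\<Sum>w\<in>A. h w * walk_entry n w i j)"
  unfolding walk_matrix_def using assms by (intro sum.mono_neutral_left) (auto simp: supp_def)

lemma walk_matrix_word: "walk_matrix n (word u) i j = walk_entry n u i j"
  by (simp add: walk_matrix_def) (simp add: word_def)

lemma walk_matrix_sum:
  assumes "finite K" "\<And>k. k \<in> K \<Longrightarrow> finite (supp (h k))"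
  shows "walk_matrix n (\<lambda>w. \<Sum>k\<in>K. h k w) i j = (\<Sum>k\<in>K. walk_matrix n (h k) i j)"
proof -
  let ?A = "\<Union>k\<in>K. supp (h k)"
  have "supp (\<lambda>w. \<Sum>k\<in>K. h k w) \<subseteq> ?A"
    by (auto simp: supp_def dest: sum.not_neutral_contains_not_neutral)
  moreover have "finite ?A" using assms by auto
  moreover have "supp (h k) \<subseteq> ?A" if "k \<in> K" for k
    using that by auto
  ultimately show ?thesis
    using assms by (simp add: walk_matrix_eq_sum[of ?A] sum_distrib_right sum.swap[of _ K])
qed

lemma walk_matrix_smult:
  "finite (supp h) \<Longrightarrow> walk_matrix n (\<lambda>w. z * h w) i j = z * walk_matrix n h i j"
proof -
  assume "finite (supp h)"
  moreover have "supp (\<lambda>w. z * h w) \<subseteq> supp h" by (auto simp: supp_def)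
  ultimately show ?thesis
    by (simp add: walk_matrix_eq_sum[of "supp h"] sum_distrib_left mult.assoc)
qed

lemma walk_matrix_uminus: "finite (supp h) \<Longrightarrow> walk_matrix n (\<lambda>w. - h w) i j = - walk_matrix n h i j"
  using walk_matrix_smult[of h n "- 1"] by simp

lemma walk_matrix_mult:
  assumes "finite (supp f)" "finite (supp g)"
  shows "walk_matrix n (fr_mult f g) i j = (\<Sum>m<n. walk_matrix n f i m * walk_matrix n g m j)"
proof -
  let ?A = "supp f" and ?B = "supp g"
  let ?C = "(\<lambda>(a, b). a @ b) ` (?A \<times> ?B)"
  have "walk_matrix n (fr_mult f g) i j
      = (\<Sum>c\<in>?C. \<Sum>a\<in>?A. \<Sum>b\<in>?B. if a @ b = c then f a * g b * walk_entry n c i j else 0)"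
    using assms supp_fr_mult[of f g]
    by (simp add: walk_matrix_eq_sum[of ?C] fr_mult_eq_sum_supports[of ?A ?B] sum_distrib_right
        if_distrib if_distribR cong: if_cong)
  also have "\<dots> = (\<Sum>a\<in>?A. \<Sum>b\<in>?B. \<Sum>c\<in>?C. if a @ b = c then f a * g b * walk_entry n c i j else 0)"
    by (subst sum.swap) (simp only: sum.swap[of _ ?C])
  also have "\<dots> = (\<Sum>a\<in>?A. \<Sum>b\<in>?B. f a * g b * walk_entry n (a @ b) i j)"
    using assms by (intro sum.cong refl) (force simp: sum.delta)
  also have "\<dots> = (\<Sum>a\<in>?A. \<Sum>b\<in>?B. \<Sum>m<n. (f a * walk_entry n a i m) * (g b * walk_entry n b m j))"
    by (simp add: walk_entry_append sum_distrib_left mult_ac)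
  also have "\<dots> = (\<Sum>m<n. walk_matrix n f i m * walk_matrix n g m j)"
    unfolding walk_matrix_def sum_product by (subst sum.swap) (simp only: sum.swap[of _ "{..<n}"])
  finally show ?thesis .
qed

lemma walk_matrix_add:
  assumes "finite (supp f)" "finite (supp g)"
  shows "walk_matrix n (\<lambda>w. f w + g w) i j = walk_matrix n f i j + walk_matrix n g i j"
proof -
  have "supp (\<lambda>w. f w + g w) \<subseteq> supp f \<union> supp g" by (auto simp: supp_def)
  with assms show ?thesis
    by (simp add: walk_matrix_eq_sum[of "supp f \<union> supp g"] sum.distrib distrib_right)
qed

lemma walk_matrix_diff:
  assumes "finite (supp f)" "finite (supp g)"
  shows "walk_matrix n (\<lambda>w. f w - g w) i j = walk_matrix n f i j - walk_matrix n g i j"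
proof -
  have "supp (\<lambda>w. f w - g w) \<subseteq> supp f \<union> supp g" by (auto simp: supp_def)
  with assms show ?thesis
    by (simp add: walk_matrix_eq_sum[of "supp f \<union> supp g"] sum_subtractf left_diff_distrib)
qed

definition walk_kernel :: "nat \<Rightarrow> int \<Rightarrow> (bool list \<Rightarrow> int) set" where
  "walk_kernel n N = {h \<in> carrier free_ring2. \<forall>i j. N dvd walk_matrix n h i j}"

lemma ideal_walk_kernel: "ideal (walk_kernel n N) free_ring2"
proof (rule idealI[OF ring_free_ring2])
  show "subgroup (walk_kernel n N) (add_monoid free_ring2)"
  proof (rule free_ring2.add.subgroupI)
    have "(\<lambda>w. 0) \<in> walk_kernel n N"
      by (simp add: walk_kernel_def carrier_free_ring2 walk_matrix_def supp_def)
    then show "walk_kernel n N \<noteq> {}" by blast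
  next
    fix f assume "f \<in> walk_kernel n N"
    then show "\<ominus>\<^bsub>free_ring2\<^esub> f \<in> walk_kernel n N"
      by (auto simp: walk_kernel_def a_inv_free_ring2 walk_matrix_uminus carrier_free_ring2 supp_def)
  qed (auto simp: walk_kernel_def carrier_free_ring2 walk_matrix_add finite_supp_add)
qed (auto simp: walk_kernel_def carrier_free_ring2 walk_matrix_mult finite_supp_fr_mult
    intro!: dvd_sum)

definition relators :: "nat \<Rightarrow> int \<Rightarrow> (bool list \<Rightarrow> int) set" where
  "relators n N = { gen_x [^]\<^bsub>free_ring2\<^esub> n,
       gen_y [^]\<^bsub>free_ring2\<^esub> n,
       (gen_x \<otimes>\<^bsub>free_ring2\<^esub> gen_y)
         \<oplus>\<^bsub>free_ring2\<^esub> (add_pow free_ring2 (N + 1)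
              ((gen_y [^]\<^bsub>free_ring2\<^esub> (n - 1)) \<otimes>\<^bsub>free_ring2\<^esub> (gen_x [^]\<^bsub>free_ring2\<^esub> (n - 1))))
         \<ominus>\<^bsub>free_ring2\<^esub> \<one>\<^bsub>free_ring2\<^esub> }"

lemma presented_ring_eq: "presented_ring n N = free_ring2 Quot genideal free_ring2 (relators n N)"
  by (simp add: presented_ring_def relators_def)

lemma relators_eq_words:
  "relators n N = {word (replicate n True), word (replicate n False),
     \<lambda>w. word [True, False] w + (N + 1) * word (replicate (n - 1) False @ replicate (n - 1) True) w
       - word [] w}"
  by (simp add: relators_def gen_x_eq_word gen_y_eq_word word_pow word_mult fr_one_eq_word
      add_pow_free_ring2 a_minus_def a_inv_free_ring2)

lemma relators_closed: "relators n N \<subseteq> carrier free_ring2"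
  by (simp add: relators_eq_words carrier_free_ring2 finite_supp_add finite_supp_diff finite_supp_smult)

lemma relators_walk_kernel:
  assumes "0 < n"
  shows "relators n N \<subseteq> walk_kernel n N"
proof -
  let ?u = "replicate (n - 1) False @ replicate (n - 1) True"
  have "walk_entry n (replicate n b) i j = 0" for b i j
    using walk_replicate_True[of n i n "[]"] walk_replicate_False[of n i n "[]"]
    by (cases b) (auto simp: walk_entry_def)
  moreover have "N dvd walk_entry n [True, False] i j + (N + 1) * walk_entry n ?u i j
      - walk_entry n [] i j" for i j
  proof -
    have "walk n i ?u = (if i = 0 then Some 0 else None)"
      using assms by (simp add: walk_replicate_False walk_replicate_True[of n _ _ "[]", simplified])
        linarith
    then have "walk_entry n [True, False] i j + (N + 1) * walk_entry n ?u i j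
        - walk_entry n [] i j = (if i = 0 \<and> j = 0 then N else 0)"
      using assms by (auto simp: walk_entry_def)
    then show ?thesis by simp
  qed
  moreover have "walk_matrix n (\<lambda>w. word [True, False] w + (N + 1) * word ?u w - word [] w) i j
      = walk_entry n [True, False] i j + (N + 1) * walk_entry n ?u i j - walk_entry n [] i j" for i j
    by (simp add: walk_matrix_diff walk_matrix_add walk_matrix_smult walk_matrix_word
        finite_supp_add finite_supp_smult)
  ultimately show ?thesis
    using relators_closed[of n N] by (simp add: relators_eq_words walk_kernel_def walk_matrix_word)
qed

section \<open>Matrix units from the relations\<close>

locale xy_relations = ring R for R (structure) +
  fixes X Y :: 'a and m :: nat and N :: int
  assumes X_closed [simp]: "X \<in> carrier R" and Y_closed [simp]: "Y \<in> carrier R"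
    and X_pow: "X [^] Suc m = \<zero>" and Y_pow: "Y [^] Suc m = \<zero>"
    and XY_relation: "X \<otimes> Y \<oplus> [(N + 1)] \<cdot> (Y [^] m \<otimes> X [^] m) \<ominus> \<one> = \<zero>"
begin

definition e :: 'a where
  "e = [(N + 1)] \<cdot> (Y [^] m \<otimes> X [^] m)"

definition E :: "nat \<Rightarrow> nat \<Rightarrow> 'a" where
  "E i j = X [^] i \<otimes> e \<otimes> Y [^] j"

definition S :: "nat \<Rightarrow> 'a" where
  "S k = (\<Oplus>i\<in>{..<k}. E i i)"

lemma e_closed [simp]: "e \<in> carrier R"
  by (simp add: e_def)

lemma E_closed [simp]: "E i j \<in> carrier R"
  by (simp add: E_def)

lemma S_closed [simp]: "S k \<in> carrier R"
  by (simp add: S_def)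

lemma S_Suc: "S (Suc k) = S k \<oplus> E k k"
  by (simp add: S_def finsum_lessThan_Suc)

lemma X_pow_ge: "Suc m \<le> k \<Longrightarrow> X [^] k = \<zero>"
  using nat_pow_mult[of X "Suc m" "k - Suc m"] X_pow by (simp del: nat_pow_Suc)

lemma Y_pow_ge: "Suc m \<le> k \<Longrightarrow> Y [^] k = \<zero>"
  using nat_pow_mult[of Y "Suc m" "k - Suc m"] Y_pow by (simp del: nat_pow_Suc)

lemma XY_eq: "X \<otimes> Y = \<one> \<ominus> e"
proof -
  have "X \<otimes> Y = (X \<otimes> Y \<oplus> e \<ominus> \<one>) \<oplus> (\<one> \<ominus> e)"
    using X_closed Y_closed e_closed by algebra
  then show ?thesis using XY_relation by (simp add: e_def)
qed

lemma X_E: "X \<otimes> E i j = E (Suc i) j"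
  unfolding E_def nat_pow_Suc2[OF X_closed, of i] by (simp add: m_assoc del: nat_pow_Suc)

lemma E_Y: "E i j \<otimes> Y = E i (Suc j)"
  unfolding E_def by (simp add: m_assoc)

lemma X_S_Y: "X \<otimes> S k \<otimes> Y \<oplus> e = S (Suc k)"
proof (induction k)
  case 0 then show ?case by (simp add: S_Suc) (simp add: S_def E_def)
next
  case (Suc k)
  have "X \<otimes> S (Suc k) \<otimes> Y \<oplus> e = (X \<otimes> S k \<otimes> Y \<oplus> e) \<oplus> X \<otimes> E k k \<otimes> Y"
    unfolding S_Suc using X_closed Y_closed e_closed S_closed E_closed by algebra
  then show ?case by (simp add: Suc X_E E_Y S_Suc[of "Suc k"])
qed

lemma X_pow_Y_pow: "X [^] k \<otimes> Y [^] k = \<one> \<ominus> S k"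
proof (induction k)
  case 0 then show ?case by (simp add: S_def a_minus_def)
next
  case (Suc k)
  have "X [^] Suc k \<otimes> Y [^] Suc k = X \<otimes> (X [^] k \<otimes> Y [^] k) \<otimes> Y"
    unfolding nat_pow_Suc2[OF X_closed, of k] nat_pow_Suc[of Y k] by (simp add: m_assoc del: nat_pow_Suc)
  also have "\<dots> = X \<otimes> Y \<ominus> X \<otimes> S k \<otimes> Y"
    unfolding Suc using X_closed Y_closed S_closed by algebra
  also have "\<dots> = \<one> \<ominus> (X \<otimes> S k \<otimes> Y \<oplus> e)"
    unfolding XY_eq using X_closed Y_closed S_closed e_closed by algebra
  finally show ?case by (simp add: X_S_Y)
qed

lemma S_Suc_m: "S (Suc m) = \<one>"
  using X_pow_Y_pow[of "Suc m"] X_pow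
  by (metis S_closed a_minus_def add.inv_closed l_null minus_equality nat_pow_closed one_closed r_neg
      Y_closed)

lemma e_Y_pow_X_pow_m_less: "i < m \<Longrightarrow> e \<otimes> Y [^] i \<otimes> X [^] m = \<zero>"
proof (induction i rule: less_induct)
  case (less i)
  have S_term: "X [^] (m - i) \<otimes> E l l \<otimes> X [^] m = \<zero>" if "l < i" for l
    using less.IH[of l] that less.prems by (simp add: E_def m_assoc del: nat_pow_Suc)
  have "X [^] m \<otimes> Y [^] i = X [^] (m - i) \<otimes> (X [^] i \<otimes> Y [^] i)"
    using less.prems nat_pow_mult[OF X_closed, of "m - i" i]
    by (metis m_assoc nat_pow_closed X_closed Y_closed le_add_diff_inverse2 less_imp_le)
  then have "X [^] m \<otimes> Y [^] i \<otimes> X [^] m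
      = X [^] (m - i) \<otimes> X [^] m \<ominus> X [^] (m - i) \<otimes> S i \<otimes> X [^] m"
    unfolding X_pow_Y_pow by (simp add: a_minus_def r_distr l_distr r_minus l_minus m_assoc)
  also have "X [^] (m - i) \<otimes> X [^] m = \<zero>"
    using less.prems by (simp add: nat_pow_mult X_pow_ge del: nat_pow_Suc)
  also have "X [^] (m - i) \<otimes> S i \<otimes> X [^] m = (\<Oplus>l\<in>{..<i}. X [^] (m - i) \<otimes> E l l \<otimes> X [^] m)"
    by (simp add: S_def finsum_ldistr finsum_rdistr Pi_def)
  also have "\<dots> = \<zero>"
    by (simp add: S_term finsum_zero cong: finsum_cong)
  finally have "X [^] m \<otimes> Y [^] i \<otimes> X [^] m = \<zero>" by (simp add: a_minus_def)
  then have "Y [^] m \<otimes> X [^] m \<otimes> Y [^] i \<otimes> X [^] m = \<zero>"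
    by (simp add: m_assoc del: nat_pow_Suc)
  then show ?case
    by (simp add: e_def add_pow_ldistr_int del: nat_pow_Suc)
qed

lemma X_pow_m_Y_pow_m_X_pow_m: "X [^] m \<otimes> Y [^] m \<otimes> X [^] m = X [^] m"
proof -
  have "S m \<otimes> X [^] m = (\<Oplus>i\<in>{..<m}. X [^] i \<otimes> (e \<otimes> Y [^] i \<otimes> X [^] m))"
    by (simp add: S_def finsum_ldistr E_def m_assoc cong: finsum_cong)
  also have "\<dots> = \<zero>"
    by (simp add: e_Y_pow_X_pow_m_less finsum_zero del: nat_pow_Suc cong: finsum_cong)
  finally show ?thesis
    using X_pow_Y_pow[of m] by (simp add: a_minus_def l_distr l_minus del: nat_pow_Suc)
qed

lemma e_eq: "e = Y [^] m \<otimes> X [^] m"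
proof -
  let ?p = "Y [^] m \<otimes> X [^] m"
  have p_idem: "?p \<otimes> ?p = ?p"
    using X_pow_m_Y_pow_m_X_pow_m by (simp add: m_assoc del: nat_pow_Suc)
  have "?p \<otimes> (X \<otimes> Y) = Y [^] m \<otimes> ((X [^] m \<otimes> X) \<otimes> Y)"
    by (simp add: m_assoc del: nat_pow_Suc)
  also have "\<dots> = \<zero>"
    using X_pow by simp
  finally have "?p \<otimes> (X \<otimes> Y) = \<zero>" .
  then have "?p \<ominus> ?p \<otimes> e = \<zero>"
    by (simp add: XY_eq a_minus_def r_distr r_minus del: nat_pow_Suc)
  moreover have "?p = (?p \<ominus> ?p \<otimes> e) \<oplus> ?p \<otimes> e"
    by (simp add: a_minus_def a_assoc l_neg del: nat_pow_Suc)
  ultimately have "?p = ?p \<otimes> e"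
    by simp
  also have "\<dots> = e"
    by (simp add: e_def add_pow_rdistr_int p_idem del: nat_pow_Suc)
  finally show ?thesis ..
qed

lemma e_idem: "e \<otimes> e = e"
  using X_pow_m_Y_pow_m_X_pow_m by (simp add: e_eq m_assoc del: nat_pow_Suc)

lemma add_pow_N_e: "[N] \<cdot> e = \<zero>"
proof -
  have "[N] \<cdot> e \<oplus> e = [(N + 1)] \<cdot> e"
    by (simp add: add.int_pow_mult)
  also have "\<dots> = e"
    by (subst (2) e_def) (simp add: e_eq)
  finally show ?thesis by simp
qed

lemma e_Y_pow_X_pow_m: "e \<otimes> Y [^] a \<otimes> X [^] m = (if a = m then e else \<zero>)"
proof -
  consider "a < m" | "a = m" | "Suc m \<le> a" by linarith
  then show ?thesis
  proof cases
    case 2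
    then show ?thesis by (simp add: e_eq [symmetric] m_assoc e_idem del: nat_pow_Suc)
  qed (simp_all add: e_Y_pow_X_pow_m_less Y_pow_ge)
qed

lemma e_Y_pow_X_pow_e:
  "j \<le> m \<Longrightarrow> k \<le> m \<Longrightarrow> e \<otimes> Y [^] j \<otimes> X [^] k \<otimes> e = (if j = k then e else \<zero>)"
proof (induction k rule: less_induct)
  case (less k)
  let ?a = "e \<otimes> Y [^] j" and ?b = "Y [^] (m - k) \<otimes> X [^] m"
  have "Y [^] m = Y [^] k \<otimes> Y [^] (m - k)"
    using less.prems nat_pow_mult[OF Y_closed, of k "m - k"] by simp
  then have "X [^] k \<otimes> e = X [^] k \<otimes> Y [^] k \<otimes> ?b"
    unfolding e_eq by (simp add: m_assoc del: nat_pow_Suc)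
  then have "e \<otimes> Y [^] j \<otimes> X [^] k \<otimes> e = ?a \<otimes> ?b \<ominus> ?a \<otimes> S k \<otimes> ?b"
    by (simp add: X_pow_Y_pow m_assoc a_minus_def r_distr l_distr r_minus l_minus del: nat_pow_Suc)
  also have "?a \<otimes> ?b = e \<otimes> Y [^] (j + (m - k)) \<otimes> X [^] m"
    by (simp add: m_assoc nat_pow_mult[OF Y_closed, symmetric] del: nat_pow_Suc)
  also have "\<dots> = (if j = k then e else \<zero>)"
    using less.prems by (simp add: e_Y_pow_X_pow_m) linarith
  also have "?a \<otimes> S k \<otimes> ?b = (\<Oplus>l\<in>{..<k}. (e \<otimes> Y [^] j \<otimes> X [^] l \<otimes> e) \<otimes> (Y [^] (l + (m - k)) \<otimes> X [^] m))"
    by (simp add: S_def E_def finsum_ldistr finsum_rdistr m_assoc nat_pow_mult[OF Y_closed, symmetric]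
        del: nat_pow_Suc cong: finsum_cong)
  also have "\<dots> = \<zero>"
  proof -
    have "(e \<otimes> Y [^] j \<otimes> X [^] l \<otimes> e) \<otimes> (Y [^] (l + (m - k)) \<otimes> X [^] m) = \<zero>" if "l < k" for l
    proof -
      have "l + (m - k) \<noteq> m" using that less.prems by linarith
      then show ?thesis
        using less.IH[of l] that less.prems e_Y_pow_X_pow_m[of "l + (m - k)"]
        by (simp add: m_assoc del: nat_pow_Suc)
    qed
    then show ?thesis by (simp add: finsum_zero cong: finsum_cong del: nat_pow_Suc)
  qed
  finally show ?case by (simp add: a_minus_def)
qed

lemma E_mult: "j \<le> m \<Longrightarrow> k \<le> m \<Longrightarrow> E i j \<otimes> E k l = (if j = k then E i l else \<zero>)"
proof -
  assume "j \<le> m" "k \<le> m"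
  moreover have "E i j \<otimes> E k l = X [^] i \<otimes> (e \<otimes> Y [^] j \<otimes> X [^] k \<otimes> e) \<otimes> Y [^] l"
    by (simp add: E_def m_assoc del: nat_pow_Suc)
  ultimately show ?thesis by (simp add: e_Y_pow_X_pow_e E_def)
qed

lemma add_pow_N_E: "[N] \<cdot> E i j = \<zero>"
proof -
  have "[N] \<cdot> E i j = X [^] i \<otimes> ([N] \<cdot> e) \<otimes> Y [^] j"
    by (simp add: E_def add_pow_ldistr_int add_pow_rdistr_int)
  then show ?thesis by (simp add: add_pow_N_e)
qed

lemma add_pow_mod_N_E: "[(z mod N)] \<cdot> E i j = [z] \<cdot> E i j"
proof -
  have "[z] \<cdot> E i j = [(z mod N)] \<cdot> E i j \<oplus> [(z div N)] \<cdot> ([N] \<cdot> E i j)"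
    by (simp add: add.int_pow_mult [symmetric] add.int_pow_pow mult.commute)
  then show ?thesis by (simp add: add_pow_N_E)
qed

lemma E_Suc_m_left: "E (Suc m) j = \<zero>"
  by (simp only: E_def X_pow) simp

lemma E_Suc_m_right: "E i (Suc m) = \<zero>"
  by (simp only: E_def Y_pow) simp

lemma X_eq_finsum_E: "X = (\<Oplus>i\<in>{..<Suc m}. E (Suc i) i)"
proof -
  have "X = X \<otimes> S (Suc m)" by (simp add: S_Suc_m del: S_Suc)
  also have "\<dots> = (\<Oplus>i\<in>{..<Suc m}. E (Suc i) i)"
    by (simp add: S_def finsum_rdistr X_E)
  finally show ?thesis .
qed

lemma Y_eq_finsum_E: "Y = (\<Oplus>i\<in>{..<Suc m}. E i (Suc i))"
proof -
  have "Y = S (Suc m) \<otimes> Y" by (simp add: S_Suc_m del: S_Suc)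
  also have "\<dots> = (\<Oplus>i\<in>{..<Suc m}. E i (Suc i))"
    by (simp add: S_def finsum_ldistr E_Y)
  finally show ?thesis .
qed

definition of_mat :: "(nat \<Rightarrow> nat \<Rightarrow> int) \<Rightarrow> 'a" where
  "of_mat A = (\<Oplus>i\<in>{..<Suc m}. \<Oplus>j\<in>{..<Suc m}. [(A i j)] \<cdot> E i j)"

lemma of_mat_closed [simp]: "of_mat A \<in> carrier R"
  by (simp add: of_mat_def)

lemma of_mat_cong:
  "(\<And>i j. i \<le> m \<Longrightarrow> j \<le> m \<Longrightarrow> A i j = B i j) \<Longrightarrow> of_mat A = of_mat B"
  unfolding of_mat_def by (intro finsum_cong' refl) (auto simp: less_Suc_eq_le)

lemma of_mat_mod: "of_mat (\<lambda>i j. A i j mod N) = of_mat A"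
  by (simp add: of_mat_def add_pow_mod_N_E)

lemma of_mat_add: "of_mat (\<lambda>i j. A i j + B i j) = of_mat A \<oplus> of_mat B"
  by (simp add: of_mat_def add.int_pow_mult finsum_addf)

lemma of_mat_add_pow: "of_mat (\<lambda>i j. z * A i j) = [z] \<cdot> of_mat A"
  by (simp add: of_mat_def add_pow_finsum add.int_pow_pow mult.commute)

lemma finsum_E_select_row:
  "a \<le> Suc m \<Longrightarrow> (\<Oplus>i\<in>{..<Suc m}. [(if i = a then 1 else 0 :: int)] \<cdot> E i j) = E a j"
proof (cases "a = Suc m")
  case True
  then show ?thesis by (simp add: add_pow_int_ge finsum_zero E_Suc_m_left cong: finsum_cong)
next
  case False
  assume "a \<le> Suc m"
  then have "(\<Oplus>i\<in>{..<Suc m}. [(if i = a then 1 else 0 :: int)] \<cdot> E i j)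
      = (\<Oplus>i\<in>{..<Suc m}. if a = i then E i j else \<zero>)"
    by (intro finsum_cong') (auto simp: add_pow_int_ge)
  also have "\<dots> = E a j"
    using False \<open>a \<le> Suc m\<close> by (simp add: finsum_singleton)
  finally show ?thesis .
qed

lemma finsum_E_select_col:
  "b \<le> Suc m \<Longrightarrow> (\<Oplus>j\<in>{..<Suc m}. [(if j = b then 1 else 0 :: int)] \<cdot> E i j) = E i b"
proof (cases "b = Suc m")
  case True
  then show ?thesis by (simp add: add_pow_int_ge finsum_zero E_Suc_m_right cong: finsum_cong)
next
  case False
  assume "b \<le> Suc m"
  then have "(\<Oplus>j\<in>{..<Suc m}. [(if j = b then 1 else 0 :: int)] \<cdot> E i j)
      = (\<Oplus>j\<in>{..<Suc m}. if b = j then E i j else \<zero>)"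
    by (intro finsum_cong') (auto simp: add_pow_int_ge)
  also have "\<dots> = E i b"
    using False \<open>b \<le> Suc m\<close> by (simp add: finsum_singleton)
  finally show ?thesis .
qed

lemma of_mat_one: "of_mat (\<lambda>i j. if j = i then 1 else 0) = \<one>"
proof -
  have "of_mat (\<lambda>i j. if j = i then 1 else 0) = S (Suc m)"
    unfolding of_mat_def S_def by (rule finsum_cong') (simp_all add: finsum_E_select_col)
  then show ?thesis by (simp only: S_Suc_m)
qed

lemma of_mat_X: "of_mat (\<lambda>i j. if i = Suc j then 1 else 0) = X"
proof -
  have "of_mat (\<lambda>i j. if i = Suc j then 1 else 0)
      = (\<Oplus>j\<in>{..<Suc m}. \<Oplus>i\<in>{..<Suc m}. [(if i = Suc j then 1 else 0 :: int)] \<cdot> E i j)"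
    unfolding of_mat_def by (rule finsum_swap) auto
  also have "\<dots> = (\<Oplus>j\<in>{..<Suc m}. E (Suc j) j)"
    by (rule finsum_cong') (simp_all add: finsum_E_select_row)
  finally show ?thesis by (simp only: X_eq_finsum_E [symmetric])
qed

lemma of_mat_Y: "of_mat (\<lambda>i j. if j = Suc i then 1 else 0) = Y"
proof -
  have "of_mat (\<lambda>i j. if j = Suc i then 1 else 0) = (\<Oplus>i\<in>{..<Suc m}. E i (Suc i))"
    unfolding of_mat_def by (rule finsum_cong') (simp_all add: finsum_E_select_col)
  then show ?thesis by (simp only: Y_eq_finsum_E [symmetric])
qed

lemma of_mat_mult: "of_mat (\<lambda>i l. \<Sum>j<Suc m. A i j * B j l) = of_mat A \<otimes> of_mat B"
proof -
  let ?I = "{..<Suc m}"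
  have collapse: "(\<Oplus>k\<in>?I. \<Oplus>l\<in>?I. ([(A i j)] \<cdot> E i j) \<otimes> ([(B k l)] \<cdot> E k l))
      = (\<Oplus>l\<in>?I. [(A i j * B j l)] \<cdot> E i l)" if "j \<in> ?I" for i j
  proof -
    have "(\<Oplus>k\<in>?I. \<Oplus>l\<in>?I. ([(A i j)] \<cdot> E i j) \<otimes> ([(B k l)] \<cdot> E k l))
        = (\<Oplus>k\<in>?I. if j = k then (\<Oplus>l\<in>?I. [(A i j * B k l)] \<cdot> E i l) else \<zero>)"
      using that by (intro finsum_cong') (auto simp: add_pow_mult_add_pow E_mult finsum_zero)
    also have "\<dots> = (\<Oplus>l\<in>?I. [(A i j * B j l)] \<cdot> E i l)"
      using that by (simp add: finsum_singleton)
    finally show ?thesis .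
  qed
  have "of_mat A \<otimes> of_mat B = (\<Oplus>i\<in>?I. \<Oplus>j\<in>?I. ([(A i j)] \<cdot> E i j) \<otimes> of_mat B)"
    by (simp add: of_mat_def [of A] finsum_ldistr)
  also have "\<dots>
      = (\<Oplus>i\<in>?I. \<Oplus>j\<in>?I. \<Oplus>k\<in>?I. \<Oplus>l\<in>?I. ([(A i j)] \<cdot> E i j) \<otimes> ([(B k l)] \<cdot> E k l))"
    by (simp add: of_mat_def [of B] finsum_rdistr)
  also have "\<dots> = (\<Oplus>i\<in>?I. \<Oplus>j\<in>?I. \<Oplus>l\<in>?I. [(A i j * B j l)] \<cdot> E i l)"
    by (simp add: collapse cong: finsum_cong)
  also have "\<dots> = (\<Oplus>i\<in>?I. \<Oplus>l\<in>?I. \<Oplus>j\<in>?I. [(A i j * B j l)] \<cdot> E i l)"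
    by (rule finsum_cong') (auto intro: finsum_swap)
  also have "\<dots> = of_mat (\<lambda>i l. \<Sum>j<Suc m. A i j * B j l)"
    by (simp add: of_mat_def finsum_add_pow)
  finally show ?thesis ..
qed

end

section \<open>The presented ring\<close>

lemma finsum_free_ring2:
  "finite K \<Longrightarrow> f \<in> K \<rightarrow> carrier free_ring2 \<Longrightarrow> finsum free_ring2 f K = (\<lambda>w. \<Sum>k\<in>K. f k w)"
  by (induction K rule: finite_induct) (auto simp: free_ring2.finsum_insert Pi_def)

definition unit_word :: "nat \<Rightarrow> nat \<Rightarrow> nat \<Rightarrow> bool list" where
  "unit_word m i j = replicate i True @ replicate m False @ replicate m True @ replicate j False"

definition lift_mat :: "nat \<Rightarrow> (nat \<Rightarrow> nat \<Rightarrow> int) \<Rightarrow> bool list \<Rightarrow> int" where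
  "lift_mat m A = (\<Oplus>\<^bsub>free_ring2\<^esub>i\<in>{..<Suc m}. \<Oplus>\<^bsub>free_ring2\<^esub>j\<in>{..<Suc m}.
     [(A i j)] \<cdot>\<^bsub>free_ring2\<^esub> word (unit_word m i j))"

lemma lift_mat_closed: "lift_mat m A \<in> carrier free_ring2"
  by (simp add: lift_mat_def)

lemma lift_mat_eq: "lift_mat m A = (\<lambda>w. \<Sum>i<Suc m. \<Sum>j<Suc m. A i j * word (unit_word m i j) w)"
proof -
  have inner: "(\<Oplus>\<^bsub>free_ring2\<^esub>j\<in>{..<Suc m}. [(A i j)] \<cdot>\<^bsub>free_ring2\<^esub> word (unit_word m i j))
      = (\<lambda>w. \<Sum>j<Suc m. A i j * word (unit_word m i j) w)" for i
    by (subst finsum_free_ring2)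
      (simp_all add: add_pow_free_ring2 Pi_def carrier_free_ring2 finite_supp_smult del: sum.lessThan_Suc)
  show ?thesis
    unfolding lift_mat_def inner
    by (subst finsum_free_ring2)
      (simp_all add: Pi_def carrier_free_ring2 finite_supp_sum finite_supp_smult del: sum.lessThan_Suc)
qed

lemma walk_unit_word:
  "i \<le> m \<Longrightarrow> j \<le> m \<Longrightarrow> walk (Suc m) k (unit_word m i j) = (if k = i then Some j else None)"
  by (auto simp: unit_word_def walk_replicate_True walk_replicate_False
      walk_replicate_False[of _ _ _ "[]", simplified])

lemma walk_matrix_lift_mat:
  assumes "i \<le> m" "j \<le> m"
  shows "walk_matrix (Suc m) (lift_mat m A) i j = A i j"
proof -
  have row: "(\<Sum>j'<Suc m. A i' j' * walk_entry (Suc m) (unit_word m i' j') i j)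
      = (if i' = i then A i j else 0)" if "i' \<le> m" for i'
  proof -
    have "(\<Sum>j'<Suc m. A i' j' * walk_entry (Suc m) (unit_word m i' j') i j)
        = (\<Sum>j'<Suc m. if i' = i \<and> j' = j then A i j else 0)"
      using that by (intro sum.cong refl) (auto simp: walk_entry_def walk_unit_word)
    then show ?thesis
      using assms by (simp add: sum.delta' del: sum.lessThan_Suc)
  qed
  have "walk_matrix (Suc m) (lift_mat m A) i j
      = (\<Sum>i'<Suc m. \<Sum>j'<Suc m. A i' j' * walk_entry (Suc m) (unit_word m i' j') i j)"
    unfolding lift_mat_eq
    by (simp add: walk_matrix_sum walk_matrix_smult walk_matrix_word finite_supp_smult finite_supp_sum
        del: sum.lessThan_Suc)
  also have "\<dots> = A i j"
    using assms by (simp add: row sum.delta' del: sum.lessThan_Suc)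
  finally show ?thesis .
qed

lemma carrier_matZN:
  "A \<in> carrier (matZN n N) \<longleftrightarrow> (\<forall>i j. A i j mod N = A i j) \<and> (\<forall>i j. n \<le> i \<or> n \<le> j \<longrightarrow> A i j = 0)"
  by (simp add: matZN_def)

locale presented_matrix_ring =
  fixes m :: nat and N :: int
begin

abbreviation I :: "(bool list \<Rightarrow> int) set" where
  "I \<equiv> genideal free_ring2 (relators (Suc m) N)"

abbreviation Q :: "(bool list \<Rightarrow> int) set ring" where
  "Q \<equiv> free_ring2 Quot I"

abbreviation quot :: "(bool list \<Rightarrow> int) \<Rightarrow> (bool list \<Rightarrow> int) set" where
  "quot \<equiv> (+>\<^bsub>free_ring2\<^esub>) I"

lemma ideal_I: "ideal I free_ring2"
  by (rule free_ring2.genideal_ideal[OF relators_closed])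

lemma I_subset_walk_kernel: "I \<subseteq> walk_kernel (Suc m) N"
  by (rule free_ring2.genideal_minimal[OF ideal_walk_kernel relators_walk_kernel]) simp

sublocale quot: ring_hom_ring free_ring2 Q quot
  by (rule ideal.rcos_ring_hom_ring[OF ideal_I])

lemma quot_eq_zero_iff: "a \<in> carrier free_ring2 \<Longrightarrow> quot a = \<zero>\<^bsub>Q\<^esub> \<longleftrightarrow> a \<in> I"
proof -
  interpret ideal I free_ring2 by (rule ideal_I)
  assume "a \<in> carrier free_ring2"
  then show ?thesis
    using a_rcos_const[of a] a_rcos_self[of a] by (auto simp: FactRing_def)
qed

lemma quot_relators: "r \<in> relators (Suc m) N \<Longrightarrow> quot r = \<zero>\<^bsub>Q\<^esub>"
  using relators_closed free_ring2.genideal_self[OF relators_closed] quot_eq_zero_iff by blast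

lemma xy_relations_quot: "xy_relations Q (quot gen_x) (quot gen_y) m N"
proof -
  let ?r = "gen_x \<otimes>\<^bsub>free_ring2\<^esub> gen_y \<oplus>\<^bsub>free_ring2\<^esub> [(N + 1)] \<cdot>\<^bsub>free_ring2\<^esub>
    (gen_y [^]\<^bsub>free_ring2\<^esub> m \<otimes>\<^bsub>free_ring2\<^esub> gen_x [^]\<^bsub>free_ring2\<^esub> m) \<ominus>\<^bsub>free_ring2\<^esub> \<one>\<^bsub>free_ring2\<^esub>"
  have rels: "gen_x [^]\<^bsub>free_ring2\<^esub> Suc m \<in> relators (Suc m) N"
    "gen_y [^]\<^bsub>free_ring2\<^esub> Suc m \<in> relators (Suc m) N" "?r \<in> relators (Suc m) N"
    unfolding relators_def diff_Suc_1 by blast+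
  show ?thesis
  proof (unfold_locales)
    show "quot gen_x [^]\<^bsub>Q\<^esub> Suc m = \<zero>\<^bsub>Q\<^esub>" "quot gen_y [^]\<^bsub>Q\<^esub> Suc m = \<zero>\<^bsub>Q\<^esub>"
      using quot_relators[OF rels(1)] quot_relators[OF rels(2)]
      by (simp_all only: quot.hom_nat_pow gen_x_closed gen_y_closed)
    show "quot gen_x \<otimes>\<^bsub>Q\<^esub> quot gen_y \<oplus>\<^bsub>Q\<^esub> [(N + 1)] \<cdot>\<^bsub>Q\<^esub>
        (quot gen_y [^]\<^bsub>Q\<^esub> m \<otimes>\<^bsub>Q\<^esub> quot gen_x [^]\<^bsub>Q\<^esub> m) \<ominus>\<^bsub>Q\<^esub> \<one>\<^bsub>Q\<^esub> = \<zero>\<^bsub>Q\<^esub>"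
      using quot_relators[OF rels(3)]
      by (simp add: a_minus_def quot.hom_nat_pow quot.hom_add_pow_int del: free_ring2_simps)
  qed simp_all
qed

sublocale rel: xy_relations Q "quot gen_x" "quot gen_y" m N
  by (rule xy_relations_quot)

lemma quot_word_unit_word: "quot (word (unit_word m i j)) = rel.E i j"
proof -
  have "word (unit_word m i j) = gen_x [^]\<^bsub>free_ring2\<^esub> i \<otimes>\<^bsub>free_ring2\<^esub> gen_y [^]\<^bsub>free_ring2\<^esub> m
      \<otimes>\<^bsub>free_ring2\<^esub> gen_x [^]\<^bsub>free_ring2\<^esub> m \<otimes>\<^bsub>free_ring2\<^esub> gen_y [^]\<^bsub>free_ring2\<^esub> j"
    by (simp add: unit_word_def gen_x_eq_word gen_y_eq_word word_pow word_mult)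
  then show ?thesis
    by (simp add: rel.E_def rel.e_eq quot.S.m_assoc quot.hom_nat_pow del: free_ring2_simps)
qed

lemma quot_lift_mat: "quot (lift_mat m A) = rel.of_mat A"
  by (simp add: lift_mat_def rel.of_mat_def Pi_def comp_def quot.hom_add_pow_int quot_word_unit_word
      del: free_ring2_simps)

lemma of_mat_inj_on: "inj_on rel.of_mat (carrier (matZN (Suc m) N))"
proof (rule inj_onI)
  fix A B assume A: "A \<in> carrier (matZN (Suc m) N)" and B: "B \<in> carrier (matZN (Suc m) N)"
    and eq: "rel.of_mat A = rel.of_mat B"
  let ?d = "lift_mat m A \<ominus>\<^bsub>free_ring2\<^esub> lift_mat m B"
  have d_eq: "?d = (\<lambda>w. lift_mat m A w - lift_mat m B w)"
    by (simp add: a_minus_def a_inv_free_ring2 lift_mat_closed)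
  have "quot ?d = rel.of_mat A \<ominus>\<^bsub>Q\<^esub> rel.of_mat B"
    by (simp add: a_minus_def lift_mat_closed quot_lift_mat del: free_ring2_simps)
  then have "quot ?d = \<zero>\<^bsub>Q\<^esub>"
    by (simp add: eq a_minus_def quot.S.r_neg)
  then have "?d \<in> walk_kernel (Suc m) N"
    using I_subset_walk_kernel by (auto simp: quot_eq_zero_iff lift_mat_closed)
  then have dvd: "N dvd walk_matrix (Suc m) ?d i j" for i j
    by (simp add: walk_kernel_def)
  have dvd_entries: "N dvd A i j - B i j" if "i \<le> m" "j \<le> m" for i j
    using dvd[of i j] that lift_mat_closed[of m A] lift_mat_closed[of m B]
    by (simp add: d_eq walk_matrix_diff walk_matrix_lift_mat carrier_free_ring2)
  show "A = B"
  proof (intro ext)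
    fix i j
    show "A i j = B i j"
    proof (cases "i \<le> m \<and> j \<le> m")
      case True
      then have "A i j mod N = B i j mod N"
        using dvd_entries by (simp add: mod_eq_dvd_iff)
      then show ?thesis using A B by (simp add: carrier_matZN)
    next
      case False
      then show ?thesis using A B by (auto simp: carrier_matZN not_le)
    qed
  qed
qed

lemma quot_word_in_range: "quot (word w) \<in> range rel.of_mat"
proof (induction w)
  case Nil
  have "quot (word []) = rel.of_mat (\<lambda>i j. if j = i then 1 else 0)"
    using quot.hom_one by (simp add: rel.of_mat_one fr_one_eq_word)
  then show ?case by simp
next
  case (Cons b w)
  have "quot (word [True]) = rel.of_mat (\<lambda>i j. if i = Suc j then 1 else 0)"
    by (subst rel.of_mat_X) (simp only: gen_x_eq_word)
  moreover have "quot (word [False]) = rel.of_mat (\<lambda>i j. if j = Suc i then 1 else 0)"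
    by (subst rel.of_mat_Y) (simp only: gen_y_eq_word)
  ultimately have "quot (word [b]) \<in> range rel.of_mat"
    by (cases b) simp_all
  then obtain A B where "quot (word [b]) = rel.of_mat A" "quot (word w) = rel.of_mat B"
    using Cons by blast
  moreover have "quot (word (b # w)) = quot (word [b]) \<otimes>\<^bsub>Q\<^esub> quot (word w)"
    using word_mult[of "[b]" w] quot.hom_mult[of "word [b]" "word w"] by simp
  ultimately show ?case
    by (simp add: rel.of_mat_mult [symmetric])
qed

lemma quot_in_range: "a \<in> carrier free_ring2 \<Longrightarrow> quot a \<in> range rel.of_mat"
proof -
  have "\<forall>a. supp a \<subseteq> S \<longrightarrow> quot a \<in> range rel.of_mat" if "finite S" for S
    using that
  proof (induction S rule: finite_induct)
    case empty
    have "rel.of_mat (\<lambda>i j. 0) = \<zero>\<^bsub>Q\<^esub>"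
      using rel.of_mat_add_pow[of 0 "\<lambda>i j. 0"] by (simp add: add_pow_int_ge)
    then have "quot (\<lambda>w. 0) = rel.of_mat (\<lambda>i j. 0)"
      using quot.hom_zero by simp
    then show ?case by (auto simp: supp_def)
  next
    case (insert w S)
    show ?case
    proof (intro allI impI)
      fix a :: "bool list \<Rightarrow> int" assume supp_a: "supp a \<subseteq> insert w S"
      let ?a' = "a(w := 0)"
      have "supp ?a' \<subseteq> S" using supp_a by (auto simp: supp_def)
      then have a': "?a' \<in> carrier free_ring2" "quot ?a' \<in> range rel.of_mat"
        using insert by (auto simp: carrier_free_ring2 intro: finite_subset)
      have "a = ?a' \<oplus>\<^bsub>free_ring2\<^esub> [(a w)] \<cdot>\<^bsub>free_ring2\<^esub> word w"
        unfolding add_pow_free_ring2[OF word_closed] by (simp add: fun_eq_iff word_def)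
      then have "quot a = quot (?a' \<oplus>\<^bsub>free_ring2\<^esub> [(a w)] \<cdot>\<^bsub>free_ring2\<^esub> word w)"
        by (rule arg_cong)
      also have "\<dots> = quot ?a' \<oplus>\<^bsub>Q\<^esub> [(a w)] \<cdot>\<^bsub>Q\<^esub> quot (word w)"
        using a' by (simp add: quot.hom_add_pow_int del: free_ring2_simps)
      finally have "quot a = quot ?a' \<oplus>\<^bsub>Q\<^esub> [(a w)] \<cdot>\<^bsub>Q\<^esub> quot (word w)" .
      then show "quot a \<in> range rel.of_mat"
        using a'(2) quot_word_in_range[of w]
        by (auto simp flip: rel.of_mat_add rel.of_mat_add_pow)
    qed
  qed
  then show "a \<in> carrier free_ring2 \<Longrightarrow> quot a \<in> range rel.of_mat"
    by (auto simp: carrier_free_ring2)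
qed

lemma of_mat_image: "rel.of_mat ` carrier (matZN (Suc m) N) = carrier Q"
proof
  show "carrier Q \<subseteq> rel.of_mat ` carrier (matZN (Suc m) N)"
  proof
    fix q assume "q \<in> carrier Q"
    then obtain a where "a \<in> carrier free_ring2" "q = quot a"
      by (auto simp: FactRing_def A_RCOSETS_def')
    then obtain B where B: "q = rel.of_mat B"
      using quot_in_range by blast
    let ?A = "\<lambda>i j. if i \<le> m \<and> j \<le> m then B i j mod N else 0"
    have "rel.of_mat ?A = rel.of_mat (\<lambda>i j. B i j mod N)"
      by (rule rel.of_mat_cong) simp
    then have "q = rel.of_mat ?A"
      by (simp add: B rel.of_mat_mod)
    moreover have "?A \<in> carrier (matZN (Suc m) N)"
      by (auto simp: carrier_matZN)
    ultimately show "q \<in> rel.of_mat ` carrier (matZN (Suc m) N)" by blast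
  qed
qed auto

lemma of_mat_ring_iso: "rel.of_mat \<in> ring_iso (matZN (Suc m) N) Q"
proof (rule ring_iso_memI)
  fix A B
  have "rel.of_mat (A \<otimes>\<^bsub>matZN (Suc m) N\<^esub> B) = rel.of_mat (\<lambda>i l. (\<Sum>j<Suc m. A i j * B j l) mod N)"
    by (rule rel.of_mat_cong) (simp add: matZN_def mat_mult_mod_def)
  then show "rel.of_mat (A \<otimes>\<^bsub>matZN (Suc m) N\<^esub> B) = rel.of_mat A \<otimes>\<^bsub>Q\<^esub> rel.of_mat B"
    by (simp only: rel.of_mat_mod rel.of_mat_mult)
  show "rel.of_mat (A \<oplus>\<^bsub>matZN (Suc m) N\<^esub> B) = rel.of_mat A \<oplus>\<^bsub>Q\<^esub> rel.of_mat B"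
    by (simp add: matZN_def mat_add_mod_def [abs_def] rel.of_mat_mod rel.of_mat_add)
next
  have "rel.of_mat \<one>\<^bsub>matZN (Suc m) N\<^esub> = rel.of_mat (\<lambda>i j. (if j = i then 1 else 0) mod N)"
    by (rule rel.of_mat_cong) (simp add: matZN_def mat_one_mod_def)
  then show "rel.of_mat \<one>\<^bsub>matZN (Suc m) N\<^esub> = \<one>\<^bsub>Q\<^esub>"
    by (simp only: rel.of_mat_mod rel.of_mat_one)
next
  show "bij_betw rel.of_mat (carrier (matZN (Suc m) N)) (carrier Q)"
    by (simp add: bij_betw_def of_mat_inj_on of_mat_image)
qed simp

end

theorem theorem2:
  fixes n :: nat and N :: int
  assumes "n \<ge> 2"
  shows "matZN n N \<simeq> presented_ring n N"
proof -
  obtain m where n: "n = Suc m"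
    using assms by (cases n) auto
  interpret presented_matrix_ring m N .
  show ?thesis
    using of_mat_ring_iso by (auto simp: is_ring_iso_def presented_ring_eq n)
qed

end
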